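(* Let $n,m,N$ be positive integers, $p_1,\ldots,p_N,q_1,\ldots,q_N,g_1,\ldots,g_m\in\mathbb{R}[\mathbf{x}]$ with $\mathbf{x}=(x_1,\ldots,x_n)$, $\mathbf{K}=\{\mathbf{x}\in\mathbb{R}^n\mid g_j(\mathbf{x})\ge0,\ j\in[m]\}$ compact with $q_i>0$ on $\mathbf{K}$ for all $i\in[N]$, and $\rho=\inf_{\mathbf{x}\in\mathbf{K}}\sum_{i=1}^Np_i(\mathbf{x})/q_i(\mathbf{x})$. Suppose there are $I_1,\ldots,I_N\subseteq[n]$ and $J_1,\ldots,J_N\subseteq[m]$ with $[n]=\bigcup_iI_i$ and $[m]=\bigcup_iJ_i$ such that: (i) $p_i,q_i\in\mathbb{R}[\mathbf{x}(I_i)]$ for every $i$; (ii) $g_j\in\mathbb{R}[\mathbf{x}(I_i)]$ for every $j\in J_i$; (iii) for every $i$ there is $k\in J_i$ with $g_k=M_i-\sum_{\ell\in I_i}x_\ell^2$ for some $M_i>0$; (iv) for every $i\in\{2,\ldots,N\}$, $I_i\cap\bigcup_{j=1}^{i-1}I_j\subseteq I_k$ for some $k\in[i-1]$. Assume also $q_i>0$ on $\mathbf{K}_i$ for all $i\in[N]$. Then $\rho^{\mathrm{cs}}=\rho$, where \[ \rho^{\mathrm{cs}}=\inf\Big\{\sum_{i=1}^N\int_{\mathbf{K}_i}p_i\,\mathrm{d}\mu_i\ \Big|\ \mu_i\in\mathcal{M}(\mathbf{K}_i)_+^{\mathcal{R}},\ \int_{\mathbf{K}_i}q_i\,\mathrm{d}\mu_i=1\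 (i\in[N]),\ \pi_{ij}(q_i\,\mathrm{d}\mu_i)=\pi_{ji}(q_j\,\mathrm{d}\mu_j)\ (j\in U_i,\ i\in[N-1])\Big\}. \]
   Context: $\mathbf{x}(I)=\{x_\ell\mid\ell\in I\}$. $\mathbf{K}_i=\{\mathbf{z}\in\mathbb{R}^{I_i}\mid g_j(\mathbf{z})\ge0,\ j\in J_i\}$. $U_i=\{j\in\{i+1,\ldots,N\}\mid I_i\cap I_j\ne\emptyset\}$ ($i<N$). For a measure $\mu_i$ on $\mathbf{K}_i$, $q_i\,\mathrm{d}\mu_i$ is the measure with density $q_i$ with respect to $\mu_i$, and $\pi_{ij}(q_i\,\mathrm{d}\mu_i)$ is its image (marginal) under the coordinate projection $\mathbb{R}^{I_i}\to\mathbb{R}^{I_i\cap I_j}$. Let $\mathcal{A}=\bigcup_{i=1}^N(\operatorname{supp}p_i\cup\operatorname{supp}q_i)\cup\bigcup_{j=1}^m\operatorname{supp}g_j$ (supports = exponents of monomials with nonzero coefficients), and $\mathcal{R}=\{\mathbf{r}\in\{0,1\}^n\mid\mathbf{r}^\intercal\boldsymbol{\alpha}\equiv0\ (\mathrm{mod}\,2)\ \forall\boldsymbol{\alpha}\in\mathcal{A}\}$. For $\mathbf{r}\in\mathcal{R}$, $\mathbf{r}$ acts on $\mathbb{R}^{I_i}$ by $z_\ell\mapsto(-1)^{r_\ell}z_\ell$; for a measure $\mu$ on $\mathbf{K}_i$, $\mu^{\mathbf{r}}(S)=\mu(\mathbf{r}(S))$. $\mathcal{M}(\mathbf{K}_i)^{\mathcal{R}}_+$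 is the set of finite positive Borel measures on $\mathbf{K}_i$ with $\mu^{\mathbf{r}}=\mu$ for all $\mathbf{r}\in\mathcal{R}$. *)

theory Defs
  imports "HOL-Probability.Probability" "HOL-Library.Poly_Mapping"
begin

text \<open>Real multivariate polynomials in variables x_1, x_2, ... (indexed by nat):
  finitely supported maps from exponent vectors to real coefficients.\<close>
type_synonym mpoly = "(nat \<Rightarrow>\<^sub>0 nat) \<Rightarrow>\<^sub>0 real"

definition mpoly_eval :: "mpoly \<Rightarrow> (nat \<Rightarrow> real) \<Rightarrow> real" where
  "mpoly_eval p x = (\<Sum>\<alpha>\<in>Poly_Mapping.keys p. Poly_Mapping.lookup p \<alpha> * (\<Prod>l\<in>Poly_Mapping.keys \<alpha>. x l ^ Poly_Mapping.lookup \<alpha> l))"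

definition mpoly_vars :: "mpoly \<Rightarrow> nat set" where
  "mpoly_vars p = (\<Union>\<alpha>\<in>Poly_Mapping.keys p. Poly_Mapping.keys \<alpha>)"

definition ball_poly :: "real \<Rightarrow> nat set \<Rightarrow> mpoly" where
  "ball_poly M I = Poly_Mapping.single 0 M - (\<Sum>l\<in>I. Poly_Mapping.single (Poly_Mapping.single l 2) 1)"

text \<open>Points of R^I are extensional functions on I.\<close>
definition semialg :: "nat set \<Rightarrow> (nat \<Rightarrow> mpoly) \<Rightarrow> nat set \<Rightarrow> (nat \<Rightarrow> real) set" where
  "semialg I g J = {z \<in> PiE I (\<lambda>_. UNIV). \<forall>j\<in>J. mpoly_eval (g j) z \<ge> 0}"

text \<open>An element r of {0,1}^n is encoded by the set S = {l. r_l = 1} \<subseteq> {1..n}.\<close>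
definition sign_syms :: "nat \<Rightarrow> (nat \<Rightarrow>\<^sub>0 nat) set \<Rightarrow> nat set set" where
  "sign_syms n A = {S. S \<subseteq> {1..n} \<and> (\<forall>\<alpha>\<in>A. even (\<Sum>l\<in>S. Poly_Mapping.lookup \<alpha> l))}"

definition sflip :: "nat set \<Rightarrow> nat set \<Rightarrow> (nat \<Rightarrow> real) \<Rightarrow> (nat \<Rightarrow> real)" where
  "sflip S I z = restrict (\<lambda>l. if l \<in> S then - z l else z l) I"

definition sym_invariant :: "nat set set \<Rightarrow> nat set \<Rightarrow> (nat \<Rightarrow> real) measure \<Rightarrow> bool" where
  "sym_invariant R I \<mu> \<longleftrightarrow> (\<forall>S\<in>R. \<forall>A\<in>sets \<mu>. emeasure \<mu> (sflip S I ` A) = emeasure \<mu> A)"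

definition marginal :: "nat set \<Rightarrow> mpoly \<Rightarrow> (nat \<Rightarrow> real) measure \<Rightarrow> (nat \<Rightarrow> real) measure" where
  "marginal I' q \<mu> = distr (density \<mu> (\<lambda>z. ennreal (mpoly_eval q z))) (PiM I' (\<lambda>_. lborel)) (\<lambda>z. restrict z I')"

definition Uset :: "nat \<Rightarrow> (nat \<Rightarrow> nat set) \<Rightarrow> nat \<Rightarrow> nat set" where
  "Uset N I i = {j \<in> {i+1..N}. I i \<inter> I j \<noteq> {}}"

definition supp_set :: "nat \<Rightarrow> nat \<Rightarrow> (nat \<Rightarrow> mpoly) \<Rightarrow> (nat \<Rightarrow> mpoly) \<Rightarrow> (nat \<Rightarrow> mpoly) \<Rightarrow> (nat \<Rightarrow>\<^sub>0 nat) set" where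
  "supp_set N m p q g = (\<Union>i\<in>{1..N}. Poly_Mapping.keys (p i) \<union> Poly_Mapping.keys (q i)) \<union> (\<Union>j\<in>{1..m}. Poly_Mapping.keys (g j))"

text \<open>Feasibility of (\<mu>_1,...,\<mu>_N): \<mu>_i finite positive Borel measure on K_i (a measure on
  R^{I_i} vanishing outside K_i), R-invariant, with \<integral> q_i d\<mu>_i = 1 and matching marginals.\<close>
definition feasible_cs ::
  "nat \<Rightarrow> nat \<Rightarrow> nat \<Rightarrow> (nat \<Rightarrow> nat set) \<Rightarrow> (nat \<Rightarrow> nat set) \<Rightarrow> (nat \<Rightarrow> mpoly) \<Rightarrow> (nat \<Rightarrow> mpoly) \<Rightarrow> (nat \<Rightarrow> mpoly)
    \<Rightarrow> (nat \<Rightarrow> (nat \<Rightarrow> real) measure) \<Rightarrow> bool" where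
  "feasible_cs n m N I J g p q \<mu> \<longleftrightarrow>
     (\<forall>i\<in>{1..N}.
        sets (\<mu> i) = sets (PiM (I i) (\<lambda>_. lborel)) \<and>
        finite_measure (\<mu> i) \<and>
        emeasure (\<mu> i) (space (\<mu> i) - semialg (I i) g (J i)) = 0 \<and>
        sym_invariant (sign_syms n (supp_set N m p q g)) (I i) (\<mu> i) \<and>
        (LINT z : semialg (I i) g (J i) | \<mu> i. mpoly_eval (q i) z) = 1) \<and>
     (\<forall>i\<in>{1..N-1}. \<forall>j\<in>Uset N I i.
        marginal (I i \<inter> I j) (q i) (\<mu> i) = marginal (I i \<inter> I j) (q j) (\<mu> j))"

definition rho_cs ::
  "nat \<Rightarrow> nat \<Rightarrow> nat \<Rightarrow> (nat \<Rightarrow> nat set) \<Rightarrow> (nat \<Rightarrow> nat set) \<Rightarrow> (nat \<Rightarrow> mpoly) \<Rightarrow> (nat \<Rightarrow> mpoly) \<Rightarrow> (nat \<Rightarrow> mpoly) \<Rightarrow> ereal" where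
  "rho_cs n m N I J g p q =
     (INF \<mu> \<in> {\<mu>. feasible_cs n m N I J g p q \<mu>}.
        ereal (\<Sum>i=1..N. LINT z : semialg (I i) g (J i) | \<mu> i. mpoly_eval (p i) z))"

end

theory Submission
  imports Defs
begin

(* For every point x of K the sign symmetries give a feasible family: mu_i is the uniform
   measure on the R-orbit of x restricted to I_i, scaled by 1 / q_i(x).  Since p_i, q_i and
   the g_j are R-invariant, the orbit lies in K_i, the objective equals sum_i p_i(x)/q_i(x),
   and q_i mu_i is the uniform orbit measure itself, whose marginals do not depend on i.

   Conversely, for a feasible family the nu_i = q_i mu_i are probability measures on the
   compact sets K_i with agreeing marginals.  By induction along the ordering of (iv), for
   all continuous f_i some point x of K satisfies sum_i f_i(x) <= sum_i int f_i d nu_i.  To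
   attach block k+1, f_(k+1) is replaced by its inf-convolution with L times the distance on
   the separator coordinates; this is a function of the separator, which lies in an earlier
   block, so it can be integrated against that block's marginal instead.  Letting L grow,
   compactness yields a pair of points that agree on the separator and glue together.
   Taking f_i = p_i / q_i gives rho <= rho_cs. *)

section \<open>Evaluation of polynomials and sign flips\<close>

definition monomial_eval :: "(nat \<Rightarrow>\<^sub>0 nat) \<Rightarrow> (nat \<Rightarrow> real) \<Rightarrow> real" where
  "monomial_eval \<alpha> x = (\<Prod>l\<in>Poly_Mapping.keys \<alpha>. x l ^ Poly_Mapping.lookup \<alpha> l)"

lemma mpoly_eval_eq_sum_monomials:
  assumes "finite A" "Poly_Mapping.keys p \<subseteq> A"
  shows "mpoly_eval p x = (\<Sum>\<alpha>\<in>A. Poly_Mapping.lookup p \<alpha> * monomial_eval \<alpha> x)"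
  unfolding mpoly_eval_def monomial_eval_def
  by (rule sum.mono_neutral_left) (use assms in \<open>auto simp: in_keys_iff\<close>)

lemma mpoly_eval_add: "mpoly_eval (p + q) x = mpoly_eval p x + mpoly_eval q x"
proof -
  let ?A = "Poly_Mapping.keys p \<union> Poly_Mapping.keys q"
  have "mpoly_eval (p + q) x = (\<Sum>\<alpha>\<in>?A. Poly_Mapping.lookup (p + q) \<alpha> * monomial_eval \<alpha> x)"
    by (rule mpoly_eval_eq_sum_monomials) (simp_all add: keys_add)
  also have "\<dots> = mpoly_eval p x + mpoly_eval q x"
    by (simp add: lookup_add distrib_right sum.distrib mpoly_eval_eq_sum_monomials[of ?A])
  finally show ?thesis .
qed

lemma mpoly_eval_uminus: "mpoly_eval (- p) x = - mpoly_eval p x"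
proof -
  have "Poly_Mapping.keys (- p) = Poly_Mapping.keys p"
    by (auto simp: in_keys_iff)
  then show ?thesis
    by (simp add: mpoly_eval_def sum_negf)
qed

lemma mpoly_eval_diff: "mpoly_eval (p - q) x = mpoly_eval p x - mpoly_eval q x"
  using mpoly_eval_add[of p "- q" x] by (simp add: mpoly_eval_uminus)

lemma mpoly_eval_sum: "mpoly_eval (\<Sum>i\<in>A. f i) x = (\<Sum>i\<in>A. mpoly_eval (f i) x)"
  by (induction A rule: infinite_finite_induct) (simp_all add: mpoly_eval_def[of 0] mpoly_eval_add)

lemma mpoly_eval_single: "mpoly_eval (Poly_Mapping.single \<alpha> c) x = c * monomial_eval \<alpha> x"
  by (cases "c = 0") (auto simp: mpoly_eval_def monomial_eval_def)

lemma mpoly_eval_ball_poly: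
  "finite I \<Longrightarrow> mpoly_eval (ball_poly M I) x = M - (\<Sum>l\<in>I. x l ^ 2)"
  by (simp add: ball_poly_def mpoly_eval_diff mpoly_eval_sum mpoly_eval_single monomial_eval_def)

lemma mpoly_eval_cong:
  assumes "\<And>l. l \<in> mpoly_vars p \<Longrightarrow> x l = y l"
  shows "mpoly_eval p x = mpoly_eval p y"
  unfolding mpoly_eval_def
  by (intro sum.cong refl arg_cong2[where f="(*)"] prod.cong)
     (use assms in \<open>auto simp: mpoly_vars_def, metis\<close>)

lemma mpoly_eval_restrict:
  "mpoly_vars p \<subseteq> I \<Longrightarrow> mpoly_eval p (restrict x I) = mpoly_eval p x"
  by (rule mpoly_eval_cong) auto

lemma continuous_on_mpoly_eval: "continuous_on UNIV (mpoly_eval p)"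
  unfolding mpoly_eval_def
  by (intro continuous_intros continuous_on_product_coordinates)

lemma monomial_eval_sign_flip:
  assumes "finite S" "even (\<Sum>l\<in>S. Poly_Mapping.lookup \<alpha> l)"
    and "\<And>l. l \<in> Poly_Mapping.keys \<alpha> \<Longrightarrow> w l = (if l \<in> S then - z l else z l)"
  shows "monomial_eval \<alpha> w = monomial_eval \<alpha> z"
proof -
  let ?K = "Poly_Mapping.keys \<alpha>" and ?e = "Poly_Mapping.lookup \<alpha>"
  have "monomial_eval \<alpha> w = (\<Prod>l\<in>?K. (if l \<in> S then (-1) ^ ?e l else 1) * z l ^ ?e l)"
    unfolding monomial_eval_def
    by (intro prod.cong refl) (auto simp: assms(3) power_mult_distrib[symmetric])
  also have "\<dots> = (\<Prod>l\<in>?K \<inter> S. (-1::real) ^ ?e l) * monomial_eval \<alpha> z"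
    by (simp add: monomial_eval_def prod.distrib prod.If_cases Int_commute)
  also have "(\<Prod>l\<in>?K \<inter> S. (-1::real) ^ ?e l) = (-1) ^ (\<Sum>l\<in>S. ?e l)"
    unfolding power_sum
    by (rule prod.mono_neutral_left) (use assms(1) in \<open>auto simp: in_keys_iff, metis power_0 neq0_conv\<close>)
  finally show ?thesis
    using assms(2) by simp
qed

lemma sflip_in_PiE [simp]: "sflip S I z \<in> PiE I (\<lambda>_. UNIV)"
  by (simp add: sflip_def)

lemma restrict_sflip: "I' \<subseteq> I \<Longrightarrow> restrict (sflip S I z) I' = sflip S I' z"
  by (auto simp: sflip_def restrict_def fun_eq_iff)

lemma sflip_sflip: "sflip T I (sflip S I z) = sflip (sym_diff S T) I z"
  by (auto simp: sflip_def restrict_def fun_eq_iff)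

lemma sflip_sflip_cancel: "z \<in> PiE I (\<lambda>_. UNIV) \<Longrightarrow> sflip T I (sflip T I z) = z"
  by (auto simp: sflip_sflip sflip_def PiE_def extensional_def)

lemma mpoly_eval_sflip:
  assumes "S \<in> sign_syms n A" "Poly_Mapping.keys p \<subseteq> A" "mpoly_vars p \<subseteq> I"
  shows "mpoly_eval p (sflip S I z) = mpoly_eval p z"
  unfolding mpoly_eval_def monomial_eval_def[symmetric]
proof (intro sum.cong refl arg_cong2[where f="(*)"] monomial_eval_sign_flip)
  show "finite S"
    using assms(1) by (auto simp: sign_syms_def intro: finite_subset)
  fix \<alpha> assume "\<alpha> \<in> Poly_Mapping.keys p"
  then show "even (\<Sum>l\<in>S. Poly_Mapping.lookup \<alpha> l)"
    using assms(1,2) by (auto simp: sign_syms_def)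
  fix l assume "l \<in> Poly_Mapping.keys \<alpha>"
  then show "sflip S I z l = (if l \<in> S then - z l else z l)"
    using \<open>\<alpha> \<in> _\<close> assms(3) by (auto simp: sflip_def mpoly_vars_def)
qed

lemma finite_sign_syms: "finite (sign_syms n A)"
  by (rule finite_subset[of _ "Pow {1..n}"]) (auto simp: sign_syms_def)

lemma empty_in_sign_syms: "{} \<in> sign_syms n A"
  by (simp add: sign_syms_def)

lemma symdiff_in_sign_syms:
  assumes "S \<in> sign_syms n A" "T \<in> sign_syms n A"
  shows "sym_diff S T \<in> sign_syms n A"
  unfolding sign_syms_def
proof (intro CollectI conjI ballI)
  show "sym_diff S T \<subseteq> {1..n}"
    using assms by (auto simp: sign_syms_def)
  fix \<alpha> assume "\<alpha> \<in> A"
  let ?s = "\<lambda>X. \<Sum>l\<in>X. Poly_Mapping.lookup \<alpha> l"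
  have fin: "finite S" "finite T"
    using assms by (auto simp: sign_syms_def intro: finite_subset)
  have "?s S = ?s (S - T) + ?s (S \<inter> T)" "?s T = ?s (T - S) + ?s (S \<inter> T)"
    using fin sum.subset_diff[of "S \<inter> T" S] sum.subset_diff[of "S \<inter> T" T]
    by (simp_all add: Diff_Int Int_commute)
  moreover have "?s (sym_diff S T) = ?s (S - T) + ?s (T - S)"
    using fin by (intro sum.union_disjoint) auto
  moreover have "even (?s S)" "even (?s T)"
    using assms \<open>\<alpha> \<in> A\<close> by (auto simp: sign_syms_def)
  ultimately show "even (?s (sym_diff S T))"
    by presburger
qed

section \<open>Functions of finitely many real coordinates\<close>

lemma borel_measurable_PiM_if_continuous:
  fixes f :: "(nat \<Rightarrow> real) \<Rightarrow> 'b::topological_space"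
  assumes "continuous_on UNIV f"
  shows "f \<in> borel_measurable (PiM I (\<lambda>_. lborel))"
proof -
  have "(\<lambda>z. z) \<in> PiM I (\<lambda>_. lborel) \<rightarrow>\<^sub>M PiM UNIV (\<lambda>_. borel)"
  proof (rule measurable_PiM_single')
    fix l :: nat
    show "(\<lambda>z. z l) \<in> borel_measurable (PiM I (\<lambda>_. lborel))"
    proof (cases "l \<in> I")
      case True
      then show ?thesis
        using measurable_component_singleton[of l I "\<lambda>_. lborel"] by simp
    next
      case False
      then show ?thesis
        by (subst measurable_cong[where g="\<lambda>_. undefined"]) (auto simp: space_PiM)
    qed
  qed simp
  then have "(\<lambda>z. z) \<in> borel_measurable (PiM I (\<lambda>_. lborel))"
    by (simp add: measurable_cong_sets[OF refl sets_PiM_equal_borel])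
  then show ?thesis
    using borel_measurable_continuous_onI[OF assms] by (rule measurable_compose)
qed

lemma continuous_on_restrict:
  fixes g :: "'c::topological_space \<Rightarrow> 'a \<Rightarrow> 'b::topological_space"
  assumes "continuous_on A g"
  shows "continuous_on A (\<lambda>x. restrict (g x) I)"
proof (intro continuous_on_coordinatewise_then_product)
  fix i
  have "continuous_on A (\<lambda>x. g x i)"
    using continuous_on_compose2[OF continuous_on_product_coordinates assms] by simp
  then show "continuous_on A (\<lambda>x. restrict (g x) I i)"
    by (cases "i \<in> I") simp_all
qed

lemma compact_PiE:
  assumes "\<And>l. l \<in> U \<Longrightarrow> compact (C l)"
  shows "compact (PiE U C :: ('a \<Rightarrow> 'b::topological_space) set)"
proof -
  define C' where "C' l = (if l \<in> U then C l else {undefined})" for l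
  have "PiE U C = PiE UNIV C'"
    by (auto simp: C'_def PiE_iff extensional_def split: if_splits)
  moreover have "compactin (product_topology (\<lambda>_. euclidean) UNIV) (PiE UNIV C')"
    using assms by (subst compactin_PiE) (auto simp: C'_def)
  ultimately show ?thesis
    by (simp add: euclidean_product_topology)
qed

definition glued_set ::
  "nat \<Rightarrow> (nat \<Rightarrow> 'a set) \<Rightarrow> (nat \<Rightarrow> ('a \<Rightarrow> 'b) set) \<Rightarrow> ('a \<Rightarrow> 'b) set" where
  "glued_set N I K = {x \<in> PiE (\<Union>i\<in>{1..N}. I i) (\<lambda>_. UNIV). \<forall>i\<in>{1..N}. restrict x (I i) \<in> K i}"

lemma glued_set_0: "glued_set 0 I K = {\<lambda>_. undefined}"
  by (simp add: glued_set_def)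

lemma compact_glued_set:
  assumes "\<And>i. i \<in> {1..N} \<Longrightarrow> compact (K i :: (nat \<Rightarrow> real) set)"
  shows "compact (glued_set N I K)"
proof -
  define U where "U = (\<Union>i\<in>{1..N}. I i)"
  define C where "C l = (\<Union>i\<in>{i\<in>{1..N}. l \<in> I i}. (\<lambda>z. z l) ` K i)" for l
  have "compact (C l)" for l
    unfolding C_def using assms
    by (intro compact_UN compact_continuous_image continuous_on_subset[OF continuous_on_product_coordinates])
       auto
  moreover have "closed (\<Inter>i\<in>{1..N}. (\<lambda>x. restrict x (I i)) -` K i)"
    using assms
    by (intro closed_INT ballI closed_vimage compact_imp_closed continuous_on_restrict continuous_on_id) auto
  moreover have "glued_set N I K = PiE U C \<inter> (\<Inter>i\<in>{1..N}. (\<lambda>x. restrict x (I i)) -` K i)"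
  proof (intro equalityI subsetI)
    fix x assume x: "x \<in> glued_set N I K"
    have "x l \<in> C l" if "l \<in> U" for l
    proof -
      obtain i where i: "i \<in> {1..N}" "l \<in> I i"
        using \<open>l \<in> U\<close> by (auto simp: U_def)
      then have "restrict x (I i) \<in> K i"
        using x by (simp add: glued_set_def)
      then have "restrict x (I i) l \<in> (\<lambda>z. z l) ` K i"
        by blast
      then show ?thesis
        using i by (auto simp: C_def)
    qed
    then show "x \<in> PiE U C \<inter> (\<Inter>i\<in>{1..N}. (\<lambda>x. restrict x (I i)) -` K i)"
      using x by (auto simp: glued_set_def U_def PiE_iff)
  qed (auto simp: glued_set_def U_def PiE_iff)
  ultimately show ?thesis
    by (simp add: compact_Int_closed compact_PiE)
qed

lemma glued_set_Suc_glue: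
  assumes x: "x \<in> glued_set n I K" and z: "z \<in> K (Suc n)" "z \<in> PiE (I (Suc n)) (\<lambda>_. UNIV)"
    and agree: "\<And>l. l \<in> I (Suc n) \<Longrightarrow> l \<in> (\<Union>i\<in>{1..n}. I i) \<Longrightarrow> x l = z l"
  obtains w where "w \<in> glued_set (Suc n) I K"
    and "\<And>i. i \<in> {1..n} \<Longrightarrow> restrict w (I i) = restrict x (I i)" and "restrict w (I (Suc n)) = z"
proof
  define U where "U = (\<Union>i\<in>{1..n}. I i)"
  define w where "w l = (if l \<in> U then x l else z l)" for l
  show old: "restrict w (I i) = restrict x (I i)" if "i \<in> {1..n}" for i
    using that by (auto simp: w_def U_def)
  show new: "restrict w (I (Suc n)) = z"
    using agree z(2) by (auto simp: w_def U_def PiE_iff extensional_def)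
  have "{1..Suc n} = insert (Suc n) {1..n}"
    by auto
  then show "w \<in> glued_set (Suc n) I K"
    using x z old new by (auto simp: glued_set_def w_def U_def PiE_iff extensional_def)
qed

lemma compact_semialg_ball:
  assumes "finite I" "k \<in> J" "g k = ball_poly M I"
  shows "compact (semialg I g J)"
proof -
  have "semialg I g J = PiE I (\<lambda>_. cball 0 (sqrt M)) \<inter> (\<Inter>j\<in>J. {z. 0 \<le> mpoly_eval (g j) z})"
  proof (intro equalityI subsetI)
    fix z assume z: "z \<in> semialg I g J"
    have "(\<Sum>l\<in>I. z l ^ 2) \<le> M"
      using z assms by (force simp: semialg_def mpoly_eval_ball_poly)
    then have "z l ^ 2 \<le> M" if "l \<in> I" for l
      using member_le_sum[of l I "\<lambda>l. z l ^ 2"] that assms(1) by simp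
    then have "\<bar>z l\<bar> \<le> sqrt M" if "l \<in> I" for l
      using that by (simp add: real_le_rsqrt)
    with z show "z \<in> PiE I (\<lambda>_. cball 0 (sqrt M)) \<inter> (\<Inter>j\<in>J. {z. 0 \<le> mpoly_eval (g j) z})"
      by (auto simp: semialg_def PiE_iff)
  qed (auto simp: semialg_def PiE_iff)
  moreover have "closed (\<Inter>j\<in>J. {z. 0 \<le> mpoly_eval (g j) z})"
    by (intro closed_INT ballI closed_Collect_le continuous_on_const continuous_on_mpoly_eval)
  ultimately show ?thesis
    by (simp add: compact_Int_closed compact_PiE)
qed

lemma borel_measurable_mpoly_eval [measurable]: "mpoly_eval p \<in> borel_measurable (PiM I (\<lambda>_. lborel))"
  by (rule borel_measurable_PiM_if_continuous[OF continuous_on_mpoly_eval])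

lemma semialg_in_sets:
  assumes "finite J"
  shows "semialg I g J \<in> sets (PiM I (\<lambda>_. lborel))"
proof -
  have "semialg I g J = {z \<in> space (PiM I (\<lambda>_. lborel)). \<forall>j\<in>J. 0 \<le> mpoly_eval (g j) z}"
    by (simp add: semialg_def space_PiM)
  also have "\<dots> \<in> sets (PiM I (\<lambda>_. lborel))"
    using assms
    by (intro sets.sets_Collect_finite_All borel_measurable_le borel_measurable_const
        borel_measurable_PiM_if_continuous continuous_on_mpoly_eval)
  finally show ?thesis .
qed

section \<open>Penalties and inf-convolutions\<close>

lemma compact_sublevel_set:
  fixes \<Phi> :: "'a::t2_space \<Rightarrow> real"
  assumes C: "compact C" and "continuous_on C \<Phi>"
  shows "compact {p\<in>C. \<Phi> p \<le> c}"
proof -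
  have "closed (C \<inter> \<Phi> -` {..c})"
    by (rule continuous_closed_preimage[OF assms(2) compact_imp_closed[OF C]]) simp
  moreover have "{p\<in>C. \<Phi> p \<le> c} = C \<inter> (C \<inter> \<Phi> -` {..c})"
    by auto
  ultimately show ?thesis
    using compact_Int_closed[OF C] by metis
qed

lemma penalty_method_limit:
  fixes \<Phi> D :: "'a::metric_space \<Rightarrow> real"
  assumes C: "compact C" and cont: "continuous_on C \<Phi>" "continuous_on C D"
    and D_nonneg: "\<And>p. p \<in> C \<Longrightarrow> 0 \<le> D p"
    and penalized: "\<And>L::nat. \<exists>p\<in>C. \<Phi> p + real L * D p \<le> c"
  shows "\<exists>p\<in>C. D p = 0 \<and> \<Phi> p \<le> c"
proof -
  define C' where "C' = {p\<in>C. \<Phi> p \<le> c}"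
  have "C' \<subseteq> C" "compact C'"
    using compact_sublevel_set[OF C cont(1)] by (auto simp: C'_def)
  have penalized': "\<exists>p\<in>C'. \<Phi> p + real L * D p \<le> c" for L
  proof -
    obtain p where p: "p \<in> C" "\<Phi> p + real L * D p \<le> c"
      using penalized by blast
    moreover have "0 \<le> real L * D p"
      using D_nonneg[OF p(1)] by simp
    ultimately show ?thesis
      unfolding C'_def by force
  qed
  then have "C' \<noteq> {}" "C \<noteq> {}"
    using \<open>C' \<subseteq> C\<close> by auto
  obtain p0 where p0: "p0 \<in> C'" "\<And>p. p \<in> C' \<Longrightarrow> D p0 \<le> D p"
    using continuous_attains_inf[OF \<open>compact C'\<close> \<open>C' \<noteq> {}\<close> continuous_on_subset[OF cont(2) \<open>C' \<subseteq> C\<close>]]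
    by blast
  obtain m where m: "\<And>p. p \<in> C \<Longrightarrow> m \<le> \<Phi> p"
    using continuous_attains_inf[OF C \<open>C \<noteq> {}\<close> cont(1)] by blast
  have "D p0 = 0"
  proof (rule ccontr)
    assume "D p0 \<noteq> 0"
    then have pos: "0 < D p0"
      using D_nonneg p0(1) by (force simp: C'_def)
    obtain L :: nat where L: "(c - m) / D p0 < L"
      using reals_Archimedean2 by blast
    obtain p where p: "p \<in> C'" "\<Phi> p + real L * D p \<le> c"
      using penalized' by blast
    have "m + real L * D p0 \<le> c"
      using m[of p] p p0(2)[OF p(1)] mult_left_mono[of "D p0" "D p" "real L"]
      by (auto simp: C'_def)
    then show False
      using L pos by (simp add: field_simps)
  qed
  then show ?thesis
    using p0(1) by (auto simp: C'_def)
qed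

definition inf_convolution ::
  "('b \<Rightarrow> real) \<Rightarrow> ('b \<Rightarrow> 'a::metric_space) \<Rightarrow> 'b set \<Rightarrow> real \<Rightarrow> 'a \<Rightarrow> real" where
  "inf_convolution f \<pi> K L y = (INF z\<in>K. f z + L * dist y (\<pi> z))"

lemma inf_convolution_attained:
  assumes "compact K" "K \<noteq> {}" "continuous_on K f" "continuous_on K \<pi>"
  obtains z where "z \<in> K" "inf_convolution f \<pi> K L y = f z + L * dist y (\<pi> z)"
    and "\<And>z'. z' \<in> K \<Longrightarrow> inf_convolution f \<pi> K L y \<le> f z' + L * dist y (\<pi> z')"
proof -
  have "continuous_on K (\<lambda>z. f z + L * dist y (\<pi> z))"
    using assms(3,4) by (intro continuous_intros)
  then obtain z where z: "z \<in> K" "\<And>z'. z' \<in> K \<Longrightarrow> f z + L * dist y (\<pi> z) \<le> f z' + L * dist y (\<pi> z')"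
    using continuous_attains_inf[OF assms(1,2)] by blast
  then have "inf_convolution f \<pi> K L y = f z + L * dist y (\<pi> z)"
    unfolding inf_convolution_def by (intro cInf_eq_minimum) auto
  with z that show ?thesis
    by simp
qed

lemma lipschitz_on_inf_convolution:
  assumes "compact K" "K \<noteq> {}" "continuous_on K f" "continuous_on K \<pi>" "0 \<le> L"
  shows "L-lipschitz_on UNIV (inf_convolution f \<pi> K L)"
proof (rule lipschitz_onI)
  let ?h = "inf_convolution f \<pi> K L"
  have *: "?h y \<le> ?h y' + L * dist y y'" for y y'
  proof -
    obtain z where z: "z \<in> K" "?h y' = f z + L * dist y' (\<pi> z)"
      using inf_convolution_attained[OF assms(1-4)] by blast
    obtain "?h y \<le> f z + L * dist y (\<pi> z)"
      using inf_convolution_attained[OF assms(1-4)] z(1) by blast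
    also have "\<dots> \<le> f z + L * (dist y y' + dist y' (\<pi> z))"
      using assms(5) dist_triangle[of y "\<pi> z" y'] by (simp add: mult_left_mono)
    finally show ?thesis
      using z(2) by (simp add: algebra_simps)
  qed
  fix y y' show "dist (?h y) (?h y') \<le> L * dist y y'"
    using *[of y y'] *[of y' y] by (simp add: dist_real_def dist_commute)
qed (fact assms(5))

section \<open>Gluing probability measures along a running intersection\<close>

lemma integral_eq_if_marginals_eq:
  fixes h :: "(nat \<Rightarrow> real) \<Rightarrow> real"
  assumes marg: "distr \<nu> (PiM S (\<lambda>_. lborel)) (\<lambda>z. restrict z S) =
                 distr \<nu>' (PiM S (\<lambda>_. lborel)) (\<lambda>z. restrict z S)"
    and sets: "sets \<nu> = sets (PiM I (\<lambda>_. lborel))" "sets \<nu>' = sets (PiM I' (\<lambda>_. lborel))"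
    and "S \<subseteq> I" "S \<subseteq> I'" and h: "h \<in> borel_measurable (PiM S (\<lambda>_. lborel))"
  shows "(\<integral>z. h (restrict z S) \<partial>\<nu>) = (\<integral>z. h (restrict z S) \<partial>\<nu>')"
proof -
  have "(\<lambda>z. restrict z S) \<in> \<nu> \<rightarrow>\<^sub>M PiM S (\<lambda>_. lborel)"
    and "(\<lambda>z. restrict z S) \<in> \<nu>' \<rightarrow>\<^sub>M PiM S (\<lambda>_. lborel)"
    using measurable_restrict_subset[OF \<open>S \<subseteq> I\<close>] measurable_restrict_subset[OF \<open>S \<subseteq> I'\<close>]
    by (simp_all add: measurable_cong_sets[OF sets(1) refl] measurable_cong_sets[OF sets(2) refl])
  then show ?thesis
    using h marg by (metis integral_distr)
qed

locale compatible_family =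
  fixes N :: nat and I :: "nat \<Rightarrow> nat set"
    and K :: "nat \<Rightarrow> (nat \<Rightarrow> real) set" and \<nu> :: "nat \<Rightarrow> (nat \<Rightarrow> real) measure"
  assumes compact_K: "\<And>i. i \<in> {1..N} \<Longrightarrow> compact (K i)"
    and K_subset: "\<And>i. i \<in> {1..N} \<Longrightarrow> K i \<subseteq> PiE (I i) (\<lambda>_. UNIV)"
    and sets_\<nu>: "\<And>i. i \<in> {1..N} \<Longrightarrow> sets (\<nu> i) = sets (PiM (I i) (\<lambda>_. lborel))"
    and prob_space_\<nu>: "\<And>i. i \<in> {1..N} \<Longrightarrow> prob_space (\<nu> i)"
    and AE_in_K: "\<And>i. i \<in> {1..N} \<Longrightarrow> AE z in \<nu> i. z \<in> K i"
    and running_intersection: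
      "\<And>i. i \<in> {2..N} \<Longrightarrow> \<exists>k\<in>{1..i-1}. I i \<inter> (\<Union>j\<in>{1..i-1}. I j) \<subseteq> I k"
    and marginals_eq: "\<And>i j. i \<in> {1..N-1} \<Longrightarrow> j \<in> Uset N I i \<Longrightarrow>
      distr (\<nu> i) (PiM (I i \<inter> I j) (\<lambda>_. lborel)) (\<lambda>z. restrict z (I i \<inter> I j)) =
      distr (\<nu> j) (PiM (I i \<inter> I j) (\<lambda>_. lborel)) (\<lambda>z. restrict z (I i \<inter> I j))"
begin

lemma K_nonempty: "i \<in> {1..N} \<Longrightarrow> K i \<noteq> {}"
  using AE_in_K prob_space.AE_False[OF prob_space_\<nu>] by fastforce

lemma integrable_\<nu>:
  assumes i: "i \<in> {1..N}" and f: "f \<in> borel_measurable (PiM (I i) (\<lambda>_. lborel))" "continuous_on (K i) f"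
  shows "integrable (\<nu> i) (f :: _ \<Rightarrow> real)"
proof -
  obtain B where B: "\<And>z. z \<in> K i \<Longrightarrow> norm (f z) \<le> B"
    using compact_imp_bounded[OF compact_continuous_image[OF f(2) compact_K[OF i]]]
    by (auto simp: bounded_iff)
  have "AE z in \<nu> i. norm (f z) \<le> B"
    using AE_in_K[OF i] by eventually_elim (rule B)
  moreover have "f \<in> borel_measurable (\<nu> i)"
    using f(1) by (simp add: measurable_cong_sets[OF sets_\<nu>[OF i] refl])
  ultimately show ?thesis
    using prob_space.finite_measure[OF prob_space_\<nu>[OF i]] finite_measure.integrable_const_bound
    by blast
qed

definition glued_le_integrals :: "nat \<Rightarrow> bool" where
  "glued_le_integrals n \<longleftrightarrow>
    (\<forall>f :: nat \<Rightarrow> (nat \<Rightarrow> real) \<Rightarrow> real.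
      (\<forall>i\<in>{1..n}. f i \<in> borel_measurable (PiM (I i) (\<lambda>_. lborel)) \<and> continuous_on (K i) (f i)) \<longrightarrow>
      (\<exists>x\<in>glued_set n I K. (\<Sum>i=1..n. f i (restrict x (I i))) \<le> (\<Sum>i=1..n. \<integral>z. f i z \<partial>\<nu> i)))"

definition separator :: "nat \<Rightarrow> nat set" where
  "separator n = I (Suc n) \<inter> (\<Union>i\<in>{1..n}. I i)"

lemma separator_subset:
  assumes "Suc n \<le> N" "separator n \<noteq> {}"
  shows "\<exists>k\<in>{1..n}. separator n \<subseteq> I k"
proof -
  have "Suc n \<in> {2..N}"
    using assms by (auto simp: separator_def)
  then show ?thesis
    using running_intersection[of "Suc n"] unfolding separator_def by (metis diff_Suc_1)
qed

lemma integral_separator_eq: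
  fixes h :: "(nat \<Rightarrow> real) \<Rightarrow> real"
  assumes "Suc n \<le> N" "k \<in> {1..n}" "separator n \<subseteq> I k" "separator n \<noteq> {}"
    and h: "h \<in> borel_measurable (PiM (separator n) (\<lambda>_. lborel))"
  shows "(\<integral>z. h (restrict z (separator n)) \<partial>\<nu> k) = (\<integral>z. h (restrict z (separator n)) \<partial>\<nu> (Suc n))"
proof -
  have S: "separator n = I k \<inter> I (Suc n)"
    using assms(2,3) by (auto simp: separator_def)
  then have "Suc n \<in> Uset N I k"
    using assms by (auto simp: Uset_def)
  then have "distr (\<nu> k) (PiM (separator n) (\<lambda>_. lborel)) (\<lambda>z. restrict z (separator n)) =
             distr (\<nu> (Suc n)) (PiM (separator n) (\<lambda>_. lborel)) (\<lambda>z. restrict z (separator n))"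
    using marginals_eq[of k "Suc n"] assms(1,2) by (simp add: S le_diff_conv2)
  then show ?thesis
    using assms h
    by (intro integral_eq_if_marginals_eq[where I="I k" and I'="I (Suc n)"] sets_\<nu>) (auto simp: S)
qed

lemma glued_le_integrals_add_block_term:
  fixes h :: "(nat \<Rightarrow> real) \<Rightarrow> real"
  assumes IH: "glued_le_integrals n" and "n \<le> N" "k \<in> {1..n}"
    and f: "\<forall>i\<in>{1..n}. f i \<in> borel_measurable (PiM (I i) (\<lambda>_. lborel)) \<and> continuous_on (K i) (f i)"
    and h: "continuous_on UNIV h" "\<And>y. h y = h (restrict y (I k))"
  shows "\<exists>x\<in>glued_set n I K. (\<Sum>i=1..n. f i (restrict x (I i))) + h x
           \<le> (\<Sum>i=1..n. \<integral>z. f i z \<partial>\<nu> i) + (\<integral>z. h z \<partial>\<nu> k)"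
proof -
  have h_meas: "h \<in> borel_measurable (PiM J (\<lambda>_. lborel))" for J
    by (rule borel_measurable_PiM_if_continuous[OF h(1)])
  define f' where "f' i = (if i = k then (\<lambda>y. f i y + h y) else f i)" for i
  have "\<forall>i\<in>{1..n}. f' i \<in> borel_measurable (PiM (I i) (\<lambda>_. lborel)) \<and> continuous_on (K i) (f' i)"
    using f h_meas
    by (auto simp: f'_def intro!: borel_measurable_add continuous_on_add continuous_on_subset[OF h(1)])
  then obtain x where x: "x \<in> glued_set n I K"
    and le: "(\<Sum>i=1..n. f' i (restrict x (I i))) \<le> (\<Sum>i=1..n. \<integral>z. f' i z \<partial>\<nu> i)"
    using IH unfolding glued_le_integrals_def by blast
  have "f' i y = f i y + (if i = k then h y else 0)" for i y
    by (simp add: f'_def)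
  then have "(\<Sum>i=1..n. f' i (restrict x (I i))) = (\<Sum>i=1..n. f i (restrict x (I i))) + h x"
    using \<open>k \<in> {1..n}\<close> h(2)[of x] by (simp add: sum.distrib)
  moreover have "integrable (\<nu> k) (f k)" "integrable (\<nu> k) h"
    using f \<open>k \<in> {1..n}\<close> \<open>n \<le> N\<close> h_meas by (auto intro!: integrable_\<nu> continuous_on_subset[OF h(1)])
  then have "(\<integral>z. f' i z \<partial>\<nu> i) = (\<integral>z. f i z \<partial>\<nu> i) + (if i = k then \<integral>z. h z \<partial>\<nu> k else 0)" for i
    by (simp add: f'_def)
  then have "(\<Sum>i=1..n. \<integral>z. f' i z \<partial>\<nu> i) = (\<Sum>i=1..n. \<integral>z. f i z \<partial>\<nu> i) + (\<integral>z. h z \<partial>\<nu> k)"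
    using \<open>k \<in> {1..n}\<close> by (simp add: sum.distrib)
  ultimately show ?thesis
    using x le by auto
qed

lemma glued_le_integrals_with_separator_term:
  fixes h :: "(nat \<Rightarrow> real) \<Rightarrow> real"
  assumes IH: "glued_le_integrals n" and "Suc n \<le> N"
    and f: "\<forall>i\<in>{1..n}. f i \<in> borel_measurable (PiM (I i) (\<lambda>_. lborel)) \<and> continuous_on (K i) (f i)"
    and h: "continuous_on UNIV h" "\<And>y. h y = h (restrict y (separator n))"
  shows "\<exists>x\<in>glued_set n I K. (\<Sum>i=1..n. f i (restrict x (I i))) + h x
           \<le> (\<Sum>i=1..n. \<integral>z. f i z \<partial>\<nu> i) + (\<integral>z. h z \<partial>\<nu> (Suc n))"
proof (cases "separator n = {}")
  case True
  then have "h = (\<lambda>_. h (\<lambda>_. undefined))"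
    using h(2) by (auto simp: restrict_def)
  then obtain c where c: "h = (\<lambda>_. c)"
    by blast
  obtain x where x: "x \<in> glued_set n I K" "(\<Sum>i=1..n. f i (restrict x (I i))) \<le> (\<Sum>i=1..n. \<integral>z. f i z \<partial>\<nu> i)"
    using IH f unfolding glued_le_integrals_def by blast
  moreover have "(\<integral>z. h z \<partial>\<nu> (Suc n)) = h x"
    using prob_space.prob_space[OF prob_space_\<nu>] \<open>Suc n \<le> N\<close> by (simp add: c)
  ultimately show ?thesis
    by (auto intro!: bexI[of _ x])
next
  case False
  then obtain k where k: "k \<in> {1..n}" "separator n \<subseteq> I k"
    using separator_subset \<open>Suc n \<le> N\<close> by blast
  have h_meas: "h \<in> borel_measurable (PiM (separator n) (\<lambda>_. lborel))"
    by (rule borel_measurable_PiM_if_continuous[OF h(1)])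
  have "h y = h (restrict y (I k))" for y
    using h(2)[of y] h(2)[of "restrict y (I k)"] k(2) by (simp add: Int_absorb1)
  then obtain x where "x \<in> glued_set n I K"
    "(\<Sum>i=1..n. f i (restrict x (I i))) + h x \<le> (\<Sum>i=1..n. \<integral>z. f i z \<partial>\<nu> i) + (\<integral>z. h z \<partial>\<nu> k)"
    using glued_le_integrals_add_block_term[OF IH _ k(1) f h(1)] \<open>Suc n \<le> N\<close> by auto
  moreover have "(\<integral>z. h (restrict z (separator n)) \<partial>\<nu> k) = (\<integral>z. h (restrict z (separator n)) \<partial>\<nu> (Suc n))"
    using integral_separator_eq k False \<open>Suc n \<le> N\<close> h_meas by blast
  then have "(\<integral>z. h z \<partial>\<nu> k) = (\<integral>z. h z \<partial>\<nu> (Suc n))"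
    by (simp flip: h(2))
  ultimately show ?thesis
    by auto
qed

lemma penalized_pair_le_integrals:
  assumes IH: "glued_le_integrals n" and "Suc n \<le> N" and "0 \<le> L"
    and f: "\<forall>i\<in>{1..Suc n}. f i \<in> borel_measurable (PiM (I i) (\<lambda>_. lborel)) \<and> continuous_on (K i) (f i)"
  shows "\<exists>x\<in>glued_set n I K. \<exists>z\<in>K (Suc n).
           (\<Sum>i=1..n. f i (restrict x (I i))) + f (Suc n) z + L * dist (restrict x (separator n)) (restrict z (separator n))
           \<le> (\<Sum>i=1..Suc n. \<integral>z. f i z \<partial>\<nu> i)"
proof -
  let ?S = "separator n" and ?K = "K (Suc n)" and ?f = "f (Suc n)"
  have n: "Suc n \<in> {1..N}"
    using \<open>Suc n \<le> N\<close> by simp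
  note K = compact_K[OF n] K_nonempty[OF n]
  have f_cont: "continuous_on ?K ?f" and f_meas: "?f \<in> borel_measurable (PiM (I (Suc n)) (\<lambda>_. lborel))"
    using f by auto
  define h where "h y = inf_convolution ?f (\<lambda>z. restrict z ?S) ?K L (restrict y ?S)" for y
  have conv: "compact ?K" "?K \<noteq> {}" "continuous_on ?K ?f" "continuous_on ?K (\<lambda>z. restrict z ?S)"
    using K f_cont by (auto intro: continuous_on_restrict continuous_on_id)
  have h_cont: "continuous_on UNIV h"
    unfolding h_def
    by (rule continuous_on_compose2[OF lipschitz_on_continuous_on[OF lipschitz_on_inf_convolution[OF conv \<open>0 \<le> L\<close>]]
          continuous_on_restrict[OF continuous_on_id]]) simp
  obtain x where x: "x \<in> glued_set n I K"
    and le: "(\<Sum>i=1..n. f i (restrict x (I i))) + h x \<le> (\<Sum>i=1..n. \<integral>z. f i z \<partial>\<nu> i) + (\<integral>z. h z \<partial>\<nu> (Suc n))"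
    using glued_le_integrals_with_separator_term[OF IH \<open>Suc n \<le> N\<close> _ h_cont] f by (fastforce simp: h_def)
  have "h z \<le> ?f z" if "z \<in> ?K" for z
    using inf_convolution_attained[OF conv] that unfolding h_def by (metis add_0_right dist_self mult_zero_right)
  then have "(\<integral>z. h z \<partial>\<nu> (Suc n)) \<le> (\<integral>z. ?f z \<partial>\<nu> (Suc n))"
    using AE_in_K[OF n] f_cont f_meas h_cont borel_measurable_PiM_if_continuous[OF h_cont]
    by (intro integral_mono_AE integrable_\<nu>[OF n] continuous_on_subset[OF h_cont]) (auto elim: AE_mp)
  moreover obtain z where "z \<in> ?K" "h x = ?f z + L * dist (restrict x ?S) (restrict z ?S)"
    using inf_convolution_attained[OF conv] unfolding h_def by (metis restrict_restrict inf.idem)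
  ultimately show ?thesis
    using x le by (intro bexI[OF _ x] bexI[of _ z]) auto
qed

lemma glued_le_integrals_Suc:
  assumes IH: "glued_le_integrals n" and "Suc n \<le> N"
  shows "glued_le_integrals (Suc n)"
  unfolding glued_le_integrals_def
proof (intro allI impI)
  fix f :: "nat \<Rightarrow> (nat \<Rightarrow> real) \<Rightarrow> real"
  assume f: "\<forall>i\<in>{1..Suc n}. f i \<in> borel_measurable (PiM (I i) (\<lambda>_. lborel)) \<and> continuous_on (K i) (f i)"
  let ?C = "glued_set n I K \<times> K (Suc n)" and ?S = "separator n"
  define \<Phi> where "\<Phi> p = (\<Sum>i=1..n. f i (restrict (fst p) (I i))) + f (Suc n) (snd p)" for p
  define D where "D p = dist (restrict (fst p) ?S) (restrict (snd p) ?S)"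
    for p :: "(nat \<Rightarrow> real) \<times> (nat \<Rightarrow> real)"
  have "\<exists>p\<in>?C. D p = 0 \<and> \<Phi> p \<le> (\<Sum>i=1..Suc n. \<integral>z. f i z \<partial>\<nu> i)"
  proof (rule penalty_method_limit)
    show "compact ?C"
      using compact_K \<open>Suc n \<le> N\<close> by (intro compact_Times compact_glued_set) auto
    have restrict_fst: "continuous_on ?C (\<lambda>p. restrict (fst p) J)"
      and restrict_snd: "continuous_on ?C (\<lambda>p. restrict (snd p) J)" for J
      by (intro continuous_on_restrict continuous_on_fst continuous_on_snd continuous_on_id)+
    have "continuous_on ?C (\<lambda>p. f i (restrict (fst p) (I i)))" if "i \<in> {1..n}" for i
      by (rule continuous_on_compose2[OF _ restrict_fst, of "K i"]) (use f that in \<open>auto simp: glued_set_def\<close>)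
    moreover have "continuous_on ?C (\<lambda>p. f (Suc n) (snd p))"
      by (rule continuous_on_compose2[OF _ continuous_on_snd[OF continuous_on_id], of "K (Suc n)"])
         (use f in auto)
    ultimately show "continuous_on ?C \<Phi>"
      unfolding \<Phi>_def by (intro continuous_on_add continuous_on_sum) auto
    show "continuous_on ?C D"
      unfolding D_def by (intro continuous_on_dist restrict_fst restrict_snd)
  next
    fix L :: nat
    show "\<exists>p\<in>?C. \<Phi> p + real L * D p \<le> (\<Sum>i=1..Suc n. \<integral>z. f i z \<partial>\<nu> i)"
      using penalized_pair_le_integrals[OF IH \<open>Suc n \<le> N\<close> _ f, of L] by (auto simp: \<Phi>_def D_def)
  qed (simp add: D_def)
  then obtain x z where x: "x \<in> glued_set n I K" and z: "z \<in> K (Suc n)"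
    and agree: "restrict x ?S = restrict z ?S" and le: "\<Phi> (x, z) \<le> (\<Sum>i=1..Suc n. \<integral>z. f i z \<partial>\<nu> i)"
    by (auto simp: D_def)
  have "z \<in> PiE (I (Suc n)) (\<lambda>_. UNIV)"
    using z K_subset \<open>Suc n \<le> N\<close> by auto
  moreover have "x l = z l" if "l \<in> I (Suc n)" "l \<in> (\<Union>i\<in>{1..n}. I i)" for l
    using fun_cong[OF agree, of l] that by (simp add: separator_def)
  ultimately obtain w where "w \<in> glued_set (Suc n) I K"
    and "\<And>i. i \<in> {1..n} \<Longrightarrow> restrict w (I i) = restrict x (I i)" and "restrict w (I (Suc n)) = z"
    using glued_set_Suc_glue[OF x z] by blast
  then show "\<exists>w\<in>glued_set (Suc n) I K.
      (\<Sum>i=1..Suc n. f i (restrict w (I i))) \<le> (\<Sum>i=1..Suc n. \<integral>z. f i z \<partial>\<nu> i)"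
    using le by (intro bexI) (auto simp: \<Phi>_def)
qed

theorem exists_glued_point_le_integrals:
  fixes f :: "nat \<Rightarrow> (nat \<Rightarrow> real) \<Rightarrow> real"
  assumes "\<And>i. i \<in> {1..N} \<Longrightarrow> f i \<in> borel_measurable (PiM (I i) (\<lambda>_. lborel))"
    and "\<And>i. i \<in> {1..N} \<Longrightarrow> continuous_on (K i) (f i)"
  shows "\<exists>x\<in>glued_set N I K. (\<Sum>i=1..N. f i (restrict x (I i))) \<le> (\<Sum>i=1..N. \<integral>z. f i z \<partial>\<nu> i)"
proof -
  have "glued_le_integrals n" if "n \<le> N" for n
    using that
  proof (induction n)
    case 0
    then show ?case
      by (simp add: glued_le_integrals_def glued_set_0)
  next
    case (Suc n)
    then show ?case
      by (simp add: glued_le_integrals_Suc)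
  qed
  then show ?thesis
    using assms unfolding glued_le_integrals_def by blast
qed

end

section \<open>Sign-symmetric orbit measures\<close>

lemma measurable_sflip: "sflip T I \<in> PiM I (\<lambda>_. lborel) \<rightarrow>\<^sub>M PiM I (\<lambda>_. lborel)"
proof (rule measurable_PiM_single')
  fix l assume "l \<in> I"
  then have "(\<lambda>z. z l) \<in> borel_measurable (PiM I (\<lambda>_. lborel))"
    using measurable_component_singleton[of l I "\<lambda>_. lborel"] by simp
  then show "(\<lambda>z. sflip T I z l) \<in> PiM I (\<lambda>_. lborel) \<rightarrow>\<^sub>M lborel"
    using \<open>l \<in> I\<close> by (cases "l \<in> T") (simp_all add: sflip_def)
qed (simp add: space_PiM)

lemma sflip_image_in_sets:
  assumes "A \<in> sets (PiM I (\<lambda>_. lborel))"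
  shows "sflip T I ` A \<in> sets (PiM I (\<lambda>_. lborel))"
proof -
  have A: "A \<subseteq> PiE I (\<lambda>_. UNIV)"
    using sets.sets_into_space[OF assms] by (simp add: space_PiM)
  have "sflip T I ` A = sflip T I -` A \<inter> space (PiM I (\<lambda>_. lborel))"
  proof (intro equalityI subsetI)
    fix b assume "b \<in> sflip T I ` A"
    then obtain a where a: "a \<in> A" "b = sflip T I a"
      by blast
    then have "sflip T I b = a"
      using A sflip_sflip_cancel by blast
    with a show "b \<in> sflip T I -` A \<inter> space (PiM I (\<lambda>_. lborel))"
      by (simp add: space_PiM)
  next
    fix b assume b: "b \<in> sflip T I -` A \<inter> space (PiM I (\<lambda>_. lborel))"
    then have "b = sflip T I (sflip T I b)"
      by (simp add: space_PiM sflip_sflip_cancel)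
    with b show "b \<in> sflip T I ` A"
      by blast
  qed
  then show ?thesis
    using measurable_sets[OF measurable_sflip assms] by simp
qed

definition sign_orbit :: "nat set set \<Rightarrow> nat set \<Rightarrow> (nat \<Rightarrow> real) \<Rightarrow> (nat \<Rightarrow> real) measure" where
  "sign_orbit R I x = distr (uniform_count_measure R) (PiM I (\<lambda>_. lborel)) (\<lambda>S. sflip S I x)"

lemma measurable_sign_orbit_map:
  "(\<lambda>S. sflip S I x) \<in> uniform_count_measure R \<rightarrow>\<^sub>M PiM I (\<lambda>_. lborel)"
  by (simp add: measurable_cong_sets[OF sets_uniform_count_measure_count_space refl]
      measurable_count_space_eq1 space_PiM)

lemma sets_sign_orbit [measurable_cong]: "sets (sign_orbit R I x) = sets (PiM I (\<lambda>_. lborel))"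
  by (simp add: sign_orbit_def)

lemma prob_space_sign_orbit: "finite R \<Longrightarrow> R \<noteq> {} \<Longrightarrow> prob_space (sign_orbit R I x)"
  unfolding sign_orbit_def
  by (intro prob_space.prob_space_distr prob_space_uniform_count_measure measurable_sign_orbit_map)

lemma emeasure_sign_orbit:
  assumes "finite R" "A \<in> sets (PiM I (\<lambda>_. lborel))"
  shows "emeasure (sign_orbit R I x) A = ennreal (card {S\<in>R. sflip S I x \<in> A} / card R)"
proof -
  have "(\<lambda>S. sflip S I x) -` A \<inter> space (uniform_count_measure R) = {S\<in>R. sflip S I x \<in> A}"
    by (auto simp: space_uniform_count_measure)
  then show ?thesis
    using assms unfolding sign_orbit_def
    by (simp add: emeasure_distr[OF measurable_sign_orbit_map] emeasure_uniform_count_measure)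
qed

lemma integral_sign_orbit:
  fixes f :: "(nat \<Rightarrow> real) \<Rightarrow> real"
  assumes "finite R" "f \<in> borel_measurable (PiM I (\<lambda>_. lborel))"
  shows "(\<integral>z. f z \<partial>sign_orbit R I x) = (\<Sum>S\<in>R. f (sflip S I x)) / card R"
  using assms unfolding sign_orbit_def
  by (simp add: integral_distr[OF measurable_sign_orbit_map] integral_uniform_count_measure)

lemma distr_restrict_sign_orbit:
  assumes "I' \<subseteq> I"
  shows "distr (sign_orbit R I x) (PiM I' (\<lambda>_. lborel)) (\<lambda>z. restrict z I') = sign_orbit R I' x"
  unfolding sign_orbit_def
  using assms by (simp add: distr_distr[OF measurable_restrict_subset measurable_sign_orbit_map]
      comp_def restrict_sflip)

lemma density_sign_orbit_eq:
  assumes "g \<in> borel_measurable (PiM I (\<lambda>_. lborel))" "\<And>S. S \<in> R \<Longrightarrow> g (sflip S I x) = 1"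
  shows "density (sign_orbit R I x) g = sign_orbit R I x"
proof -
  have "density (uniform_count_measure R) (\<lambda>S. g (sflip S I x)) = density (uniform_count_measure R) (\<lambda>_. 1)"
    using assms(2)
    by (intro density_cong AE_I2)
       (auto simp: measurable_cong_sets[OF sets_uniform_count_measure_count_space refl] space_uniform_count_measure)
  then have "density (uniform_count_measure R) (\<lambda>S. g (sflip S I x)) = uniform_count_measure R"
    by (simp add: density_1)
  then show ?thesis
    unfolding sign_orbit_def by (simp add: density_distr[OF assms(1) measurable_sign_orbit_map])
qed

lemma sflip_mem_sflip_image_iff:
  assumes "A \<subseteq> PiE I (\<lambda>_. UNIV)"
  shows "sflip S I x \<in> sflip T I ` A \<longleftrightarrow> sflip (sym_diff S T) I x \<in> A"
proof
  assume "sflip S I x \<in> sflip T I ` A"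
  then obtain a where a: "a \<in> A" "sflip S I x = sflip T I a"
    by blast
  then have "sflip T I (sflip S I x) = a"
    using assms a by (metis PiE_mem sflip_sflip_cancel subsetD)
  with a(1) show "sflip (sym_diff S T) I x \<in> A"
    by (simp only: sflip_sflip)
next
  assume "sflip (sym_diff S T) I x \<in> A"
  moreover have "sflip T I (sflip (sym_diff S T) I x) = sflip S I x"
    unfolding sflip_sflip by (rule arg_cong[where f="\<lambda>S. sflip S I x"]) blast
  ultimately show "sflip S I x \<in> sflip T I ` A"
    by (metis image_eqI)
qed

lemma sym_invariant_sign_orbit:
  assumes "finite R" and symdiff: "\<And>S T. S \<in> R \<Longrightarrow> T \<in> R \<Longrightarrow> sym_diff S T \<in> R"
  shows "sym_invariant R I (sign_orbit R I x)"
  unfolding sym_invariant_def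
proof (intro ballI)
  fix T A assume T: "T \<in> R" and "A \<in> sets (sign_orbit R I x)"
  then have A: "A \<in> sets (PiM I (\<lambda>_. lborel))"
    by (simp add: sets_sign_orbit)
  let ?\<tau> = "\<lambda>S. sym_diff S T"
  have A_sub: "A \<subseteq> PiE I (\<lambda>_. UNIV)"
    using sets.sets_into_space[OF A] by (simp add: space_PiM)
  have \<tau>\<tau>: "?\<tau> (?\<tau> S) = S" for S
    by blast
  have "{S\<in>R. sflip S I x \<in> sflip T I ` A} = ?\<tau> ` {S\<in>R. sflip S I x \<in> A}"
  proof (intro equalityI subsetI)
    fix S assume "S \<in> {S\<in>R. sflip S I x \<in> sflip T I ` A}"
    then have "?\<tau> S \<in> {S\<in>R. sflip S I x \<in> A}"
      using symdiff[OF _ T] A_sub by (simp add: sflip_mem_sflip_image_iff)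
    then show "S \<in> ?\<tau> ` {S\<in>R. sflip S I x \<in> A}"
      by (rule image_eqI[where f="?\<tau>", OF \<tau>\<tau>[symmetric]])
  next
    fix S assume "S \<in> ?\<tau> ` {S\<in>R. sflip S I x \<in> A}"
    then obtain S' where "S' \<in> R" "sflip S' I x \<in> A" "S = ?\<tau> S'"
      by blast
    then show "S \<in> {S\<in>R. sflip S I x \<in> sflip T I ` A}"
      using symdiff[OF _ T] A_sub by (simp add: sflip_mem_sflip_image_iff \<tau>\<tau>)
  qed
  moreover have "inj_on ?\<tau> X" for X
    by (rule inj_on_inverseI[where g="?\<tau>"]) (rule \<tau>\<tau>)
  ultimately show "emeasure (sign_orbit R I x) (sflip T I ` A) = emeasure (sign_orbit R I x) A"
    using assms(1) A by (simp add: emeasure_sign_orbit sflip_image_in_sets card_image)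
qed

lemma sym_invariant_density_const:
  assumes "sym_invariant R I \<nu>" "sets \<nu> = sets (PiM I (\<lambda>_. lborel))"
  shows "sym_invariant R I (density \<nu> (\<lambda>_. c))"
  using assms by (simp add: sym_invariant_def emeasure_density_const sflip_image_in_sets)

section \<open>Exactness of the sparse moment relaxation\<close>

lemma prob_space_density_set_integral:
  fixes q :: "'a \<Rightarrow> real"
  assumes K: "AE z in \<mu>. z \<in> K" and q: "q \<in> borel_measurable \<mu>" "\<And>z. z \<in> K \<Longrightarrow> 0 < q z"
    and one: "(LINT z:K|\<mu>. q z) = 1"
  shows "prob_space (density \<mu> (\<lambda>z. ennreal (q z)))"
proof
  have int: "integrable \<mu> (\<lambda>z. indicator K z *\<^sub>R q z)"
    using one not_integrable_integral_eq by (force simp: set_lebesgue_integral_def)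
  have "AE z in \<mu>. ennreal (q z) * indicator (space \<mu>) z = ennreal (indicator K z *\<^sub>R q z)"
    using K AE_space by eventually_elim (auto simp: indicator_def)
  then have "(\<integral>\<^sup>+z. ennreal (q z) * indicator (space \<mu>) z \<partial>\<mu>) = (\<integral>\<^sup>+z. ennreal (indicator K z *\<^sub>R q z) \<partial>\<mu>)"
    by (rule nn_integral_cong_AE)
  also have "\<dots> = ennreal (LINT z:K|\<mu>. q z)"
    unfolding set_lebesgue_integral_def
    by (rule nn_integral_eq_integral[OF int]) (auto intro!: AE_I2 simp: indicator_def less_imp_le q(2))
  finally show "emeasure (density \<mu> (\<lambda>z. ennreal (q z))) (space (density \<mu> (\<lambda>z. ennreal (q z)))) = 1"
    using q(1) one by (simp add: emeasure_density)
qed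

lemma integral_density_divide:
  fixes p q :: "'a \<Rightarrow> real"
  assumes K: "AE z in \<mu>. z \<in> K" "K \<in> sets \<mu>"
    and pq: "p \<in> borel_measurable \<mu>" "q \<in> borel_measurable \<mu>" "\<And>z. z \<in> K \<Longrightarrow> 0 < q z"
  shows "(\<integral>z. p z / q z \<partial>density \<mu> (\<lambda>z. ennreal (q z))) = (LINT z:K|\<mu>. p z)"
proof -
  have q_pos: "AE z in \<mu>. 0 < q z"
    using K(1) by eventually_elim (rule pq(3))
  have "(\<integral>z. p z / q z \<partial>density \<mu> (\<lambda>z. ennreal (q z))) = (\<integral>z. q z *\<^sub>R (p z / q z) \<partial>\<mu>)"
    using pq q_pos by (intro integral_density) (auto elim: AE_mp)
  also have "\<dots> = (\<integral>z. indicator K z *\<^sub>R p z \<partial>\<mu>)"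
  proof (rule integral_cong_AE)
    show "AE z in \<mu>. q z *\<^sub>R (p z / q z) = indicator K z *\<^sub>R p z"
      using K(1) by eventually_elim (auto simp: indicator_def dest!: pq(3))
  qed (use K pq in auto)
  finally show ?thesis
    by (simp add: set_lebesgue_integral_def)
qed

locale correlative_sparsity =
  fixes n m N :: nat
    and p q :: "nat \<Rightarrow> mpoly" and g :: "nat \<Rightarrow> mpoly"
    and I J :: "nat \<Rightarrow> nat set" and M :: "nat \<Rightarrow> real"
  assumes I_sub: "\<forall>i\<in>{1..N}. I i \<subseteq> {1..n}"
    and J_sub: "\<forall>i\<in>{1..N}. J i \<subseteq> {1..m}"
    and I_cover: "(\<Union>i\<in>{1..N}. I i) = {1..n}"
    and J_cover: "(\<Union>i\<in>{1..N}. J i) = {1..m}"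
    and cond_i: "\<forall>i\<in>{1..N}. mpoly_vars (p i) \<subseteq> I i \<and> mpoly_vars (q i) \<subseteq> I i"
    and cond_ii: "\<forall>i\<in>{1..N}. \<forall>j\<in>J i. mpoly_vars (g j) \<subseteq> I i"
    and cond_iii: "\<forall>i\<in>{1..N}. M i > 0 \<and> (\<exists>k\<in>J i. g k = ball_poly (M i) (I i))"
    and cond_iv: "\<forall>i\<in>{2..N}. \<exists>k\<in>{1..i-1}. I i \<inter> (\<Union>j\<in>{1..i-1}. I j) \<subseteq> I k"
    and q_pos_Ki: "\<forall>i\<in>{1..N}. \<forall>z\<in>semialg (I i) g (J i). mpoly_eval (q i) z > 0"
begin

abbreviation K :: "nat \<Rightarrow> (nat \<Rightarrow> real) set" where
  "K i \<equiv> semialg (I i) g (J i)"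

abbreviation R :: "nat set set" where
  "R \<equiv> sign_syms n (supp_set N m p q g)"

lemma compact_K: "i \<in> {1..N} \<Longrightarrow> compact (K i)"
  using cond_iii I_sub by (metis compact_semialg_ball finite_atLeastAtMost finite_subset)

lemma K_in_sets: "i \<in> {1..N} \<Longrightarrow> K i \<in> sets (PiM (I i) (\<lambda>_. lborel))"
  using J_sub by (metis semialg_in_sets finite_atLeastAtMost finite_subset)

lemma semialg_eq_glued_set: "semialg {1..n} g {1..m} = glued_set N I K"
proof -
  have restrict_g: "mpoly_eval (g j) (restrict x (I i)) = mpoly_eval (g j) x" if "i \<in> {1..N}" "j \<in> J i" for i j x
    using cond_ii that by (simp add: mpoly_eval_restrict)
  show ?thesis
  proof (intro equalityI subsetI)
    fix x assume x: "x \<in> semialg {1..n} g {1..m}"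
    have "restrict x (I i) \<in> K i" if "i \<in> {1..N}" for i
      using x that J_sub by (force simp: semialg_def restrict_g)
    then show "x \<in> glued_set N I K"
      using x unfolding glued_set_def I_cover by (simp add: semialg_def)
  next
    fix x assume x: "x \<in> glued_set N I K"
    have "0 \<le> mpoly_eval (g j) x" if "j \<in> {1..m}" for j
    proof -
      have "j \<in> (\<Union>i\<in>{1..N}. J i)"
        using that by (simp only: J_cover)
      then obtain i where i: "i \<in> {1..N}" "j \<in> J i"
        by blast
      then have "restrict x (I i) \<in> K i"
        using x by (simp add: glued_set_def)
      then have "0 \<le> mpoly_eval (g j) (restrict x (I i))"
        using i(2) by (simp add: semialg_def)
      then show ?thesis
        by (simp add: restrict_g[OF i])
    qed
    then show "x \<in> semialg {1..n} g {1..m}"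
      using x unfolding glued_set_def I_cover by (simp add: semialg_def)
  qed
qed

lemma sflip_in_K:
  assumes "x \<in> semialg {1..n} g {1..m}" "i \<in> {1..N}" "S \<in> R"
  shows "sflip S (I i) x \<in> K i"
proof -
  have "0 \<le> mpoly_eval (g j) (sflip S (I i) x)" if "j \<in> J i" for j
  proof -
    have "j \<in> {1..m}"
      using J_sub assms(2) that by blast
    moreover have "Poly_Mapping.keys (g j) \<subseteq> supp_set N m p q g"
      using \<open>j \<in> {1..m}\<close> by (auto simp: supp_set_def)
    ultimately show ?thesis
      using assms cond_ii that by (auto simp: mpoly_eval_sflip semialg_def)
  qed
  then show ?thesis
    by (simp add: semialg_def)
qed

lemma mpoly_eval_sflip_pq:
  assumes "i \<in> {1..N}" "S \<in> R"
  shows "mpoly_eval (p i) (sflip S (I i) x) = mpoly_eval (p i) x"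
    and "mpoly_eval (q i) (sflip S (I i) x) = mpoly_eval (q i) x"
  using assms cond_i by (auto simp: supp_set_def intro!: mpoly_eval_sflip)

lemma finite_R: "finite R"
  by (rule finite_sign_syms)

lemma R_nonempty: "R \<noteq> {}"
  using empty_in_sign_syms by blast

lemma q_pos:
  assumes "x \<in> semialg {1..n} g {1..m}" "i \<in> {1..N}"
  shows "0 < mpoly_eval (q i) x"
  using q_pos_Ki sflip_in_K[OF assms empty_in_sign_syms] mpoly_eval_sflip_pq(2)[OF assms(2) empty_in_sign_syms]
    assms(2) by metis

definition orbit_measure :: "(nat \<Rightarrow> real) \<Rightarrow> nat \<Rightarrow> (nat \<Rightarrow> real) measure" where
  "orbit_measure x i = density (sign_orbit R (I i) x) (\<lambda>_. ennreal (1 / mpoly_eval (q i) x))"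

lemma set_integral_orbit_measure:
  assumes x: "x \<in> semialg {1..n} g {1..m}" and i: "i \<in> {1..N}"
    and f: "f \<in> borel_measurable (PiM (I i) (\<lambda>_. lborel))" "\<And>S. S \<in> R \<Longrightarrow> f (sflip S (I i) x) = f x"
  shows "(LINT z:K i|orbit_measure x i. f z) = f x / mpoly_eval (q i) x"
proof -
  have "(LINT z:K i|orbit_measure x i. f z) = (\<integral>z. (1 / mpoly_eval (q i) x) * (indicator (K i) z * f z) \<partial>sign_orbit R (I i) x)"
    unfolding set_lebesgue_integral_def orbit_measure_def
    using q_pos[OF x i] f(1) K_in_sets[OF i]
    by (subst integral_density)
       (auto simp: measurable_cong_sets[OF sets_sign_orbit refl] intro!: borel_measurable_times)
  also have "\<dots> = (\<Sum>S\<in>R. (1 / mpoly_eval (q i) x) * f x) / card R"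
    using finite_R f K_in_sets[OF i] sflip_in_K[OF x i]
    by (subst integral_sign_orbit) (auto intro!: borel_measurable_indicator)
  also have "\<dots> = f x / mpoly_eval (q i) x"
    using finite_R R_nonempty by simp
  finally show ?thesis .
qed

lemma marginal_orbit_measure:
  assumes x: "x \<in> semialg {1..n} g {1..m}" and i: "i \<in> {1..N}" and "I' \<subseteq> I i"
  shows "marginal I' (q i) (orbit_measure x i) = sign_orbit R I' x"
proof -
  let ?c = "1 / mpoly_eval (q i) x"
  have "density (orbit_measure x i) (\<lambda>z. ennreal (mpoly_eval (q i) z))
        = density (sign_orbit R (I i) x) (\<lambda>z. ennreal ?c * ennreal (mpoly_eval (q i) z))"
    unfolding orbit_measure_def by (rule density_density_eq) measurable
  also have "\<dots> = sign_orbit R (I i) x"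
    using q_pos[OF x i] mpoly_eval_sflip_pq(2)[OF i]
    by (intro density_sign_orbit_eq) (auto simp flip: ennreal_mult)
  finally show ?thesis
    using assms(3) by (simp add: marginal_def distr_restrict_sign_orbit)
qed

lemma feasible_orbit_measure:
  assumes x: "x \<in> semialg {1..n} g {1..m}"
  shows "feasible_cs n m N I J g p q (orbit_measure x)"
  unfolding feasible_cs_def
proof (intro conjI ballI)
  fix i assume i: "i \<in> {1..N}"
  let ?c = "ennreal (1 / mpoly_eval (q i) x)"
  have emeasure: "emeasure (orbit_measure x i) A = ?c * emeasure (sign_orbit R (I i) x) A"
    if "A \<in> sets (PiM (I i) (\<lambda>_. lborel))" for A
    using that by (simp add: orbit_measure_def emeasure_density_const sets_sign_orbit)
  show sets: "sets (orbit_measure x i) = sets (PiM (I i) (\<lambda>_. lborel))"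
    by (simp add: orbit_measure_def sets_sign_orbit)
  have "emeasure (sign_orbit R (I i) x) (space (PiM (I i) (\<lambda>_. lborel))) = 1"
    using prob_space.emeasure_space_1[OF prob_space_sign_orbit[OF finite_R R_nonempty]]
    by (simp add: sets_eq_imp_space_eq[OF sets_sign_orbit])
  then show "finite_measure (orbit_measure x i)"
    using emeasure[OF sets.top] by (intro finite_measureI) (simp add: sets_eq_imp_space_eq[OF sets])
  have "{S\<in>R. sflip S (I i) x \<in> space (PiM (I i) (\<lambda>_. lborel)) - K i} = {}"
    using sflip_in_K[OF x i] by blast
  then show "emeasure (orbit_measure x i) (space (orbit_measure x i) - K i) = 0"
    using K_in_sets[OF i] finite_R
    by (simp add: sets_eq_imp_space_eq[OF sets] emeasure emeasure_sign_orbit)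
  show "sym_invariant R (I i) (orbit_measure x i)"
    unfolding orbit_measure_def
    using finite_R symdiff_in_sign_syms
    by (intro sym_invariant_density_const sym_invariant_sign_orbit sets_sign_orbit)
  show "(LINT z:K i|orbit_measure x i. mpoly_eval (q i) z) = 1"
    using q_pos[OF x i] mpoly_eval_sflip_pq(2)[OF i]
    by (simp add: set_integral_orbit_measure[OF x i] borel_measurable_mpoly_eval)
next
  fix i j assume "i \<in> {1..N - 1}" "j \<in> Uset N I i"
  then have "i \<in> {1..N}" "j \<in> {1..N}"
    by (auto simp: Uset_def)
  then show "marginal (I i \<inter> I j) (q i) (orbit_measure x i) = marginal (I i \<inter> I j) (q j) (orbit_measure x j)"
    by (simp add: marginal_orbit_measure[OF x])
qed

lemma rho_cs_le_objective:
  assumes x: "x \<in> semialg {1..n} g {1..m}"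
  shows "rho_cs n m N I J g p q \<le> ereal (\<Sum>i=1..N. mpoly_eval (p i) x / mpoly_eval (q i) x)"
proof -
  have "(LINT z:K i|orbit_measure x i. mpoly_eval (p i) z) = mpoly_eval (p i) x / mpoly_eval (q i) x"
    if "i \<in> {1..N}" for i
    using that mpoly_eval_sflip_pq(1)[OF that]
    by (simp add: set_integral_orbit_measure[OF x] borel_measurable_mpoly_eval)
  then show ?thesis
    unfolding rho_cs_def using feasible_orbit_measure[OF x]
    by (intro INF_lower2[of "orbit_measure x"]) auto
qed

lemma AE_in_K_if_feasible:
  assumes "feasible_cs n m N I J g p q \<mu>" "i \<in> {1..N}"
  shows "AE z in \<mu> i. z \<in> K i"
proof (rule AE_I')
  have "sets (\<mu> i) = sets (PiM (I i) (\<lambda>_. lborel))" "emeasure (\<mu> i) (space (\<mu> i) - K i) = 0"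
    using assms by (auto simp: feasible_cs_def)
  then show "space (\<mu> i) - K i \<in> null_sets (\<mu> i)"
    using K_in_sets[OF assms(2)] by (auto simp: null_sets_def)
qed auto

lemma compatible_family_if_feasible:
  assumes feasible: "feasible_cs n m N I J g p q \<mu>"
  shows "compatible_family N I K (\<lambda>i. density (\<mu> i) (\<lambda>z. ennreal (mpoly_eval (q i) z)))"
proof (rule compatible_family.intro)
  fix i assume i: "i \<in> {1..N}"
  have sets: "sets (\<mu> i) = sets (PiM (I i) (\<lambda>_. lborel))"
    using feasible i by (simp add: feasible_cs_def)
  then have q_meas: "mpoly_eval (q i) \<in> borel_measurable (\<mu> i)"
    by (simp add: measurable_cong_sets[OF sets refl])
  show "compact (K i)"
    using i by (rule compact_K)
  show "K i \<subseteq> PiE (I i) (\<lambda>_. UNIV)"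
    by (auto simp: semialg_def)
  show "sets (density (\<mu> i) (\<lambda>z. ennreal (mpoly_eval (q i) z))) = sets (PiM (I i) (\<lambda>_. lborel))"
    using sets by simp
  show "prob_space (density (\<mu> i) (\<lambda>z. ennreal (mpoly_eval (q i) z)))"
    using feasible i q_pos_Ki q_meas
    by (intro prob_space_density_set_integral[where K="K i"] AE_in_K_if_feasible) (auto simp: feasible_cs_def)
  show "AE z in density (\<mu> i) (\<lambda>z. ennreal (mpoly_eval (q i) z)). z \<in> K i"
    using AE_in_K_if_feasible[OF feasible i] q_meas by (auto simp: AE_density elim: AE_mp)
next
  fix i assume "i \<in> {2..N}"
  then show "\<exists>k\<in>{1..i - 1}. I i \<inter> (\<Union>j\<in>{1..i-1}. I j) \<subseteq> I k"
    using cond_iv by blast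
next
  fix i j assume ij: "i \<in> {1..N - 1}" "j \<in> Uset N I i"
  show "distr (density (\<mu> i) (\<lambda>z. ennreal (mpoly_eval (q i) z)))
          (PiM (I i \<inter> I j) (\<lambda>_. lborel)) (\<lambda>z. restrict z (I i \<inter> I j)) =
        distr (density (\<mu> j) (\<lambda>z. ennreal (mpoly_eval (q j) z)))
          (PiM (I i \<inter> I j) (\<lambda>_. lborel)) (\<lambda>z. restrict z (I i \<inter> I j))"
    using feasible ij unfolding feasible_cs_def marginal_def by blast
qed

lemma inf_le_feasible_objective:
  assumes feasible: "feasible_cs n m N I J g p q \<mu>"
  shows "(INF x\<in>semialg {1..n} g {1..m}. ereal (\<Sum>i=1..N. mpoly_eval (p i) x / mpoly_eval (q i) x))
           \<le> ereal (\<Sum>i=1..N. LINT z:K i|\<mu> i. mpoly_eval (p i) z)"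
proof -
  interpret compatible_family N I K "\<lambda>i. density (\<mu> i) (\<lambda>z. ennreal (mpoly_eval (q i) z))"
    by (rule compatible_family_if_feasible[OF feasible])
  have sets: "sets (\<mu> i) = sets (PiM (I i) (\<lambda>_. lborel))" if "i \<in> {1..N}" for i
    using feasible that by (simp add: feasible_cs_def)
  obtain x where x: "x \<in> glued_set N I K"
    and le: "(\<Sum>i=1..N. mpoly_eval (p i) (restrict x (I i)) / mpoly_eval (q i) (restrict x (I i)))
      \<le> (\<Sum>i=1..N. \<integral>z. mpoly_eval (p i) z / mpoly_eval (q i) z \<partial>density (\<mu> i) (\<lambda>z. ennreal (mpoly_eval (q i) z)))"
    using exists_glued_point_le_integrals[of "\<lambda>i z. mpoly_eval (p i) z / mpoly_eval (q i) z"] q_pos_Ki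
    by (force intro!: continuous_on_divide continuous_on_subset[OF continuous_on_mpoly_eval])
  have "(\<Sum>i=1..N. mpoly_eval (p i) x / mpoly_eval (q i) x) \<le> (\<Sum>i=1..N. LINT z:K i|\<mu> i. mpoly_eval (p i) z)"
  proof -
    have "mpoly_eval r (restrict x (I i)) = mpoly_eval r x" if "i \<in> {1..N}" "r \<in> {p i, q i}" for i r
      using that cond_i by (auto simp: mpoly_eval_restrict)
    moreover have "(\<integral>z. mpoly_eval (p i) z / mpoly_eval (q i) z \<partial>density (\<mu> i) (\<lambda>z. ennreal (mpoly_eval (q i) z)))
      = (LINT z:K i|\<mu> i. mpoly_eval (p i) z)" if "i \<in> {1..N}" for i
      using that q_pos_Ki sets[OF that] K_in_sets[OF that]
      by (intro integral_density_divide AE_in_K_if_feasible[OF feasible])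
         (auto simp: measurable_cong_sets[OF sets[OF that] refl])
    ultimately show ?thesis
      using le by simp
  qed
  moreover have "x \<in> semialg {1..n} g {1..m}"
    using x by (simp only: semialg_eq_glued_set)
  ultimately show ?thesis
    by (intro INF_lower2[of x]) auto
qed

end

theorem theorem4p14:
  fixes n m N :: nat
    and p q :: "nat \<Rightarrow> mpoly" and g :: "nat \<Rightarrow> mpoly"
    and I J :: "nat \<Rightarrow> nat set" and M :: "nat \<Rightarrow> real"
  assumes "n \<ge> 1" and "m \<ge> 1" and "N \<ge> 1"
    and K_compact: "compact (semialg {1..n} g {1..m})"
    and q_pos_K: "\<forall>i\<in>{1..N}. \<forall>x\<in>semialg {1..n} g {1..m}. mpoly_eval (q i) x > 0"
    and I_sub: "\<forall>i\<in>{1..N}. I i \<subseteq> {1..n}"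
    and J_sub: "\<forall>i\<in>{1..N}. J i \<subseteq> {1..m}"
    and I_cover: "(\<Union>i\<in>{1..N}. I i) = {1..n}"
    and J_cover: "(\<Union>i\<in>{1..N}. J i) = {1..m}"
    and cond_i: "\<forall>i\<in>{1..N}. mpoly_vars (p i) \<subseteq> I i \<and> mpoly_vars (q i) \<subseteq> I i"
    and cond_ii: "\<forall>i\<in>{1..N}. \<forall>j\<in>J i. mpoly_vars (g j) \<subseteq> I i"
    and cond_iii: "\<forall>i\<in>{1..N}. M i > 0 \<and> (\<exists>k\<in>J i. g k = ball_poly (M i) (I i))"
    and cond_iv: "\<forall>i\<in>{2..N}. \<exists>k\<in>{1..i-1}. I i \<inter> (\<Union>j\<in>{1..i-1}. I j) \<subseteq> I k"
    and q_pos_Ki: "\<forall>i\<in>{1..N}. \<forall>z\<in>semialg (I i) g (J i). mpoly_eval (q i) z > 0"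
  shows "rho_cs n m N I J g p q =
           (INF x \<in> semialg {1..n} g {1..m}.
              ereal (\<Sum>i=1..N. mpoly_eval (p i) x / mpoly_eval (q i) x))"
proof -
  interpret correlative_sparsity n m N p q g I J M
    using I_sub J_sub I_cover J_cover cond_i cond_ii cond_iii cond_iv q_pos_Ki by unfold_locales
  show ?thesis
  proof (rule antisym)
    show "rho_cs n m N I J g p q \<le> (INF x\<in>semialg {1..n} g {1..m}. ereal (\<Sum>i=1..N. mpoly_eval (p i) x / mpoly_eval (q i) x))"
      by (rule INF_greatest) (rule rho_cs_le_objective)
    show "(INF x\<in>semialg {1..n} g {1..m}. ereal (\<Sum>i=1..N. mpoly_eval (p i) x / mpoly_eval (q i) x)) \<le> rho_cs n m N I J g p q"
      unfolding rho_cs_def by (rule INF_greatest) (rule inf_le_feasible_objective, simp)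
  qed
qed

end
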